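(* Let $L\ge3$ and $\lambda>0$. Among all $\bm a\in\{0,1\}^L$ with $\mathrm{wt}(\bm a)=1$, the largest eigenvalue of $\hat\Pi^{(\mathrm{ph})}_{\bm a}-\lambda\hat\Pi$ (as an operator on $\mathbb C^L$) is maximized at $\bm a=0100\cdots0$, i.e. at $a_2=1$ and $a_i=0$ for $i\ne2$.
   Context: Work in $\mathbb C^L$ with orthonormal basis $\{|1\rangle,\dots,|L\rangle\}$; $\hat P(|\psi\rangle)=|\psi\rangle\langle\psi|$ and $\delta$ is the Kronecker delta. For $\bm a\in\{0,1\}^L$, $\mathrm{wt}(\bm a)$ is the number of $1$'s. $\hat\Pi$ is the real symmetric tridiagonal $L\times L$ matrix with $\langle i|\hat\Pi|i\rangle=1/2$ for $1\le i\le L$, $\langle i|\hat\Pi|i+1\rangle=\langle i+1|\hat\Pi|i\rangle=-1/(2\sqrt2)$ for $i\in\{1,L-1\}$, and $\langle i|\hat\Pi|i+1\rangle=\langle i+1|\hat\Pi|i\rangle=-1/4$ for $2\le i\le L-2$ (all other entries zero). For $\bm a\in\{0,1\}^L$, $\hat\Pi^{(\mathrm{ph})}_{\bm a}$ is the diagonal operator $$\hat\Pi^{(\mathrm{ph})}_{\bm a}=\delta_{a_2,1}\hat P(|1\rangle)+\sum_{i=2}^{L-1}\frac{\delta_{a_{i-1},1}+\delta_{a_{i+1},1}}{2}\hat P(|i\rangle)+\delta_{a_{L-1},1}\hat P(|L\rangle).$$ *)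

theory Defs
  imports Complex_Main "Jordan_Normal_Form.Char_Poly"
begin

text \<open>Bit strings a in {0,1}^L are functions nat => nat, only the values at indices 1..L matter
  (1-based indexing as in the paper).\<close>

definition is_bitstring :: "nat \<Rightarrow> (nat \<Rightarrow> nat) \<Rightarrow> bool" where
  "is_bitstring L a \<longleftrightarrow> (\<forall>i\<in>{1..L}. a i \<in> {0, 1})"

definition wt :: "nat \<Rightarrow> (nat \<Rightarrow> nat) \<Rightarrow> nat" where
  "wt L a = card {i \<in> {1..L}. a i = 1}"

definition delta :: "nat \<Rightarrow> nat \<Rightarrow> real" where
  "delta x y = (if x = y then 1 else 0)"

definition Pi_entry :: "nat \<Rightarrow> nat \<Rightarrow> nat \<Rightarrow> real" where
  "Pi_entry L i j =
     (if i = j then 1/2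
      else if (j = i + 1 \<and> i \<in> {1, L - 1}) \<or> (i = j + 1 \<and> j \<in> {1, L - 1}) then - 1 / (2 * sqrt 2)
      else if (j = i + 1 \<and> 2 \<le> i \<and> i \<le> L - 2) \<or> (i = j + 1 \<and> 2 \<le> j \<and> j \<le> L - 2) then - 1/4
      else 0)"

definition Piph_diag :: "nat \<Rightarrow> (nat \<Rightarrow> nat) \<Rightarrow> nat \<Rightarrow> real" where
  "Piph_diag L a i =
     (if i = 1 then delta (a 2) 1
      else if 2 \<le> i \<and> i \<le> L - 1 then (delta (a (i - 1)) 1 + delta (a (i + 1)) 1) / 2
      else if i = L then delta (a (L - 1)) 1
      else 0)"

text \<open>The L x L complex matrices (0-based storage: entry (i,j) is <i+1|.|j+1>).\<close>
definition Pi_mat :: "nat \<Rightarrow> complex mat" where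
  "Pi_mat L = mat L L (\<lambda>(i, j). complex_of_real (Pi_entry L (i + 1) (j + 1)))"

definition Piph_mat :: "nat \<Rightarrow> (nat \<Rightarrow> nat) \<Rightarrow> complex mat" where
  "Piph_mat L a = mat L L (\<lambda>(i, j). if i = j then complex_of_real (Piph_diag L a (i + 1)) else 0)"

text \<open>Largest eigenvalue of a Hermitian matrix (all of whose eigenvalues are real).\<close>
definition largest_eigenvalue :: "complex mat \<Rightarrow> real" where
  "largest_eigenvalue A = Max {x :: real. eigenvalue A (complex_of_real x)}"

end

theory Submission
  imports Defs
begin

(* For y > 0 write y = lam/4 (r + 1/r) - lam/2 with 0 < r < 1. Then y + lam Pi is inverted by an
   explicit Green's function, built by the method of images from r^t + r^(2(L-1)-t). Hence an
   eigenvector of Piph_a - lam Pi with eigenvalue y (a having its 1 at site k) is determined by its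
   values at the at most two neighbours of k, where it is a fixed point of the corresponding block of
   the Green's function. Comparing the entries of these blocks, the block for k = 2 (sites 1 and 3)
   has top eigenvalue rho(r) >= 1. Since rho(r) < 1 for small r, continuity gives rho(r') = 1 for some
   r' <= r, and the corresponding fixed point extends to an eigenvector for a = 0100...0 with
   eigenvalue lam/4 (r' + 1/r') - lam/2 >= y. *)

definition site_scale :: "nat \<Rightarrow> nat \<Rightarrow> real" where
  "site_scale L i = (if i = 1 \<or> i = L then 1 else sqrt 2)"

definition nat_dist :: "nat \<Rightarrow> nat \<Rightarrow> nat" where
  "nat_dist i s = (if i \<le> s then s - i else i - s)"

lemma site_scale_pos: "site_scale L i > 0"
  unfolding site_scale_def by auto

lemma nat_dist_commute: "nat_dist i s = nat_dist s i"
  unfolding nat_dist_def by auto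

lemma sum_support_first:
  fixes f :: "nat \<Rightarrow> 'a::comm_monoid_add"
  assumes "2 \<le> L" and "\<And>j. 2 < j \<Longrightarrow> f j = 0"
  shows "(\<Sum>j\<in>{1..L}. f j) = f 1 + f 2"
proof -
  have "(\<Sum>j\<in>{1..L}. f j) = (\<Sum>j\<in>{1,2}. f j)"
    by (rule sum.mono_neutral_right) (use assms in auto)
  thus ?thesis by simp
qed

lemma sum_support_last:
  fixes f :: "nat \<Rightarrow> 'a::comm_monoid_add"
  assumes "2 \<le> L" and "\<And>j. j + 1 < L \<Longrightarrow> f j = 0"
  shows "(\<Sum>j\<in>{1..L}. f j) = f (L - 1) + f L"
proof -
  have "(\<Sum>j\<in>{1..L}. f j) = (\<Sum>j\<in>{L - 1, L}. f j)"
    by (rule sum.mono_neutral_right) (use assms in \<open>auto intro!: assms(2)\<close>)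
  thus ?thesis using assms(1) by simp
qed

lemma sum_support_around:
  fixes f :: "nat \<Rightarrow> 'a::comm_monoid_add"
  assumes "2 \<le> i" "i + 1 \<le> L" and "\<And>j. j + 1 < i \<or> i + 1 < j \<Longrightarrow> f j = 0"
  shows "(\<Sum>j\<in>{1..L}. f j) = f (i - 1) + f i + f (i + 1)"
proof -
  have "(\<Sum>j\<in>{1..L}. f j) = (\<Sum>j\<in>{i - 1, i, i + 1}. f j)"
    by (rule sum.mono_neutral_right) (use assms in \<open>auto intro!: assms(3)\<close>)
  moreover have "i - 1 \<notin> {i, i + 1}" using assms by auto
  ultimately show ?thesis by (simp add: add.assoc)
qed

lemma Pi_entry_far: "j + 1 < i \<or> i + 1 < j \<Longrightarrow> Pi_entry L i j = 0"
  unfolding Pi_entry_def by auto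

lemma Pi_entry_diag: "Pi_entry L i i = 1/2"
  unfolding Pi_entry_def by auto

lemma Pi_entry_commute: "Pi_entry L i j = Pi_entry L j i"
  unfolding Pi_entry_def by auto

lemma Pi_entry_succ:
  "1 \<le> i \<Longrightarrow> i + 1 \<le> L \<Longrightarrow>
   Pi_entry L i (i + 1) = (if i = 1 \<or> i = L - 1 then - 1 / (2 * sqrt 2) else - 1/4)"
  unfolding Pi_entry_def by auto

lemma one_div_two_sqrt2: "1 / (2 * sqrt 2) = sqrt 2 / (4::real)"
  by (simp add: field_simps)

lemma Pi_entry_succ_scale:
  assumes "2 \<le> i" "i + 1 \<le> L"
  shows "Pi_entry L i (i + 1) * site_scale L (i + 1) = - sqrt 2 / 4"
  using assms Pi_entry_succ[of i L] by (auto simp: site_scale_def one_div_two_sqrt2)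

lemma Pi_entry_pred_scale:
  assumes "2 \<le> i" "i + 1 \<le> L"
  shows "Pi_entry L i (i - 1) * site_scale L (i - 1) = - sqrt 2 / 4"
proof -
  have "Pi_entry L i (i - 1) = Pi_entry L (i - 1) (i - 1 + 1)"
    using assms Pi_entry_commute[of L i "i - 1"] by simp
  thus ?thesis
    using assms Pi_entry_succ[of "i - 1" L] by (auto simp: site_scale_def one_div_two_sqrt2)
qed

section \<open>The Green's function of the shifted hopping operator\<close>

definition refl_pow :: "nat \<Rightarrow> real \<Rightarrow> nat \<Rightarrow> real" where
  "refl_pow N r t = r ^ t + r ^ (N - t)"

lemma refl_pow_rec:
  assumes r: "0 < r" and t: "1 \<le> t" "t + 1 \<le> N"
  shows "refl_pow N r (t - 1) + refl_pow N r (t + 1) = (r + 1/r) * refl_pow N r t"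
proof -
  obtain u where u: "t = Suc u" using t by (cases t) auto
  obtain v where v: "N - t = Suc v" using t by (cases "N - t") auto
  have "N - (t - 1) = Suc (Suc v)" "N - (t + 1) = v" using t v by auto
  thus ?thesis unfolding refl_pow_def using r v by (simp add: u field_simps power2_eq_square)
qed

lemma refl_pow_reflect: "t \<le> N \<Longrightarrow> refl_pow N r (N - t) = refl_pow N r t"
  unfolding refl_pow_def by simp

lemma refl_pow_antimono:
  assumes r: "0 < r" "r < 1" and at: "a \<le> t" "t + a \<le> N"
  shows "refl_pow N r t \<le> refl_pow N r a"
proof -
  define d where "d = t - a"
  define e where "e = N - t - a"
  have t: "t = a + d" and Nt: "N - t = a + e" and Na: "N - a = a + (d + e)"
    using at unfolding d_def e_def by auto
  have "refl_pow N r a - refl_pow N r t = r ^ a * ((1 - r ^ d) * (1 - r ^ e))"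
    by (simp only: refl_pow_def Nt Na) (simp add: t power_add algebra_simps)
  moreover have "r ^ d \<le> 1" "r ^ e \<le> 1" using r by (auto intro: power_le_one)
  ultimately have "0 \<le> refl_pow N r a - refl_pow N r t" using r by simp
  thus ?thesis by simp
qed

lemma refl_pow_le_zero: "0 < r \<Longrightarrow> r < 1 \<Longrightarrow> t \<le> N \<Longrightarrow> refl_pow N r t \<le> refl_pow N r 0"
  by (rule refl_pow_antimono) auto

lemma refl_pow_pos: "0 < r \<Longrightarrow> 0 < refl_pow N r t"
  unfolding refl_pow_def by (intro add_pos_pos zero_less_power)

lemma refl_pow_le_two: "0 < r \<Longrightarrow> r < 1 \<Longrightarrow> refl_pow N r t \<le> 2"
  unfolding refl_pow_def using power_le_one[of r] by (smt (verit))

definition green_norm :: "real \<Rightarrow> nat \<Rightarrow> real \<Rightarrow> real" where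
  "green_norm lam N r = lam / 4 * ((r + 1 / r) * refl_pow N r 0 - 2 * refl_pow N r 1)"

lemma green_norm_eq:
  assumes "0 < r" and "1 \<le> N"
  shows "green_norm lam N r = lam / 4 * ((1 / r - r) * (1 - r ^ N))"
proof -
  obtain M where "N = Suc M" using assms by (cases N) auto
  thus ?thesis unfolding green_norm_def refl_pow_def using assms by (simp add: field_simps)
qed

lemma green_norm_pos:
  assumes r: "0 < r" "r < 1" and "1 \<le> N" and "lam > 0"
  shows "green_norm lam N r > 0"
proof -
  have "r ^ N < 1" using assms by (simp add: power_less_one_iff)
  moreover have "r < 1 / r" using r by (simp add: field_simps) (metis less_trans mult_less_cancel_left_pos mult.right_neutral)
  ultimately show ?thesis unfolding green_norm_eq[OF r(1) assms(3)] using assms by simp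
qed

lemma green_norm_ge_four:
  assumes r: "0 < r" "r \<le> 1/2" and rl: "64 * r \<le> lam" and N: "1 \<le> N"
  shows "4 \<le> green_norm lam N r"
proof -
  have "r ^ N \<le> r ^ 1" by (rule power_decreasing) (use N r in auto)
  hence h2: "1/2 \<le> 1 - r ^ N" using r by simp
  have "r * r \<le> (1/2) * (1/2)" using r by (intro mult_mono) auto
  hence h1: "1 / (2 * r) \<le> 1 / r - r" using r by (simp add: field_simps)
  have "1 / (2 * r) * (1/2) \<le> (1 / r - r) * (1 - r ^ N)"
    by (rule mult_mono) (use h1 h2 r in auto)
  hence "lam / 4 * (1 / (2 * r) * (1/2)) \<le> green_norm lam N r"
    unfolding green_norm_eq[OF r(1) N] using r rl by (intro mult_left_mono) auto
  moreover have "4 \<le> lam / 4 * (1 / (2 * r) * (1/2))" using r rl by (simp add: field_simps)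
  ultimately show ?thesis by linarith
qed

lemma refl_pow_second_difference:
  assumes r: "0 < r" and lam: "lam > 0" and i: "1 \<le> i" and d: "nat_dist i s < N"
  shows "(r + 1/r) * refl_pow N r (nat_dist i s) - refl_pow N r (nat_dist (i - 1) s)
           - refl_pow N r (nat_dist (i + 1) s)
         = (if i = s then 4 * green_norm lam N r / lam else 0)"
proof -
  consider "i = s" | "i < s" | "s < i" by linarith
  thus ?thesis
  proof cases
    case 1
    thus ?thesis using i lam unfolding green_norm_def by (simp add: nat_dist_def field_simps)
  next
    case 2
    have "refl_pow N r (s - i - 1) + refl_pow N r (s - i + 1) = (r + 1/r) * refl_pow N r (s - i)"
      by (rule refl_pow_rec) (use r d 2 in \<open>auto simp: nat_dist_def\<close>)
    moreover have "nat_dist i s = s - i" "nat_dist (i - 1) s = s - i + 1" "nat_dist (i + 1) s = s - i - 1"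
      using 2 i by (auto simp: nat_dist_def)
    ultimately show ?thesis using 2 by simp
  next
    case 3
    have "refl_pow N r (i - s - 1) + refl_pow N r (i - s + 1) = (r + 1/r) * refl_pow N r (i - s)"
      by (rule refl_pow_rec) (use r d 3 in \<open>auto simp: nat_dist_def\<close>)
    moreover have "nat_dist i s = i - s" "nat_dist (i - 1) s = i - s - 1" "nat_dist (i + 1) s = i - s + 1"
      using 3 i by (auto simp: nat_dist_def)
    ultimately show ?thesis using 3 by simp
  qed
qed

definition image_kernel :: "nat \<Rightarrow> real \<Rightarrow> nat \<Rightarrow> nat \<Rightarrow> real" where
  "image_kernel L r s t =
     refl_pow (2 * (L - 1)) r (nat_dist s t) + refl_pow (2 * (L - 1)) r (s + t - 2)"

text \<open>Method of images: the chain \<open>1..L\<close> is unfolded to a ring of length \<open>2 (L - 1)\<close>, with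
  \<open>site_scale\<close> absorbing the different hopping amplitudes at the two ends. By
  \<open>shifted_Pi_green\<close> this inverts \<open>level lam r + lam \<Pi>\<close>.\<close>
definition green :: "nat \<Rightarrow> real \<Rightarrow> real \<Rightarrow> nat \<Rightarrow> nat \<Rightarrow> real" where
  "green L lam r i s =
     site_scale L i * site_scale L s * image_kernel L r i s / (2 * green_norm lam (2 * (L - 1)) r)"

definition level :: "real \<Rightarrow> real \<Rightarrow> real" where
  "level lam r = lam / 4 * (r + 1 / r) - lam / 2"

definition shifted_Pi :: "nat \<Rightarrow> real \<Rightarrow> real \<Rightarrow> nat \<Rightarrow> nat \<Rightarrow> real" where
  "shifted_Pi L lam y i j = (if i = j then y else 0) + lam * Pi_entry L i j"

lemma image_kernel_commute: "image_kernel L r s t = image_kernel L r t s"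
  unfolding image_kernel_def by (simp add: nat_dist_commute add.commute)

lemma green_commute: "green L lam r i s = green L lam r s i"
  unfolding green_def by (simp add: image_kernel_commute mult.commute)

lemma shifted_Pi_commute: "shifted_Pi L lam y i j = shifted_Pi L lam y j i"
  unfolding shifted_Pi_def using Pi_entry_commute by auto

lemma shifted_Pi_far: "j + 1 < i \<or> i + 1 < j \<Longrightarrow> shifted_Pi L lam y i j = 0"
  unfolding shifted_Pi_def using Pi_entry_far by auto

lemma shifted_Pi_level_diag: "shifted_Pi L lam (level lam r) i i = lam / 4 * (r + 1 / r)"
  unfolding shifted_Pi_def level_def by (simp add: Pi_entry_diag)

lemma sqrt2_mult_sqrt2: "sqrt 2 * (sqrt 2 * x) = 2 * (x::real)"
  by (simp add: mult.assoc[symmetric])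

lemma shifted_Pi_green_first:
  assumes L: "3 \<le> L" and lam: "lam > 0" and r: "0 < r" "r < 1" and s: "1 \<le> s" "s \<le> L"
  shows "(\<Sum>j\<in>{1..L}. shifted_Pi L lam (level lam r) 1 j * green L lam r j s) = (if 1 = s then 1 else 0)"
proof -
  define N where "N = 2 * (L - 1)"
  define K where "K = green_norm lam N r"
  define g where "g = refl_pow N r"
  have K: "K > 0" unfolding K_def N_def using green_norm_pos[OF r _ lam] L by auto
  have a2: "shifted_Pi L lam (level lam r) 1 2 = - lam * sqrt 2 / 4"
    unfolding shifted_Pi_def Pi_entry_def using L by (simp add: one_div_two_sqrt2)
  have g1: "green L lam r 1 s = site_scale L s * (2 * g (nat_dist 1 s)) / (2 * K)"
    unfolding green_def image_kernel_def N_def[symmetric] K_def[symmetric] g_def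
    using s by (simp add: site_scale_def nat_dist_def)
  have g2: "green L lam r 2 s = sqrt 2 * site_scale L s * (g (nat_dist 2 s) + g (nat_dist 0 s)) / (2 * K)"
    unfolding green_def image_kernel_def N_def[symmetric] K_def[symmetric] g_def
    using s L by (simp add: site_scale_def nat_dist_def)
  have "(\<Sum>j\<in>{1..L}. shifted_Pi L lam (level lam r) 1 j * green L lam r j s)
     = shifted_Pi L lam (level lam r) 1 1 * green L lam r 1 s
       + shifted_Pi L lam (level lam r) 1 2 * green L lam r 2 s"
    by (rule sum_support_first) (use L in \<open>auto simp: shifted_Pi_far\<close>)
  also have "\<dots> = lam * site_scale L s / (4 * K)
      * ((r + 1/r) * g (nat_dist 1 s) - g (nat_dist 0 s) - g (nat_dist 2 s))"
    unfolding shifted_Pi_level_diag a2 g1 g2 using K by (simp add: field_simps sqrt2_mult_sqrt2)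
  also have "\<dots> = (if 1 = s then 1 else 0)"
  proof -
    have "nat_dist 1 s < N" using s L by (simp add: nat_dist_def N_def)
    from refl_pow_second_difference[OF r(1) lam order_refl this]
    have "(r + 1/r) * g (nat_dist 1 s) - g (nat_dist 0 s) - g (nat_dist 2 s)
        = (if 1 = s then 4 * K / lam else 0)" unfolding g_def K_def by (simp only: one_add_one diff_self_eq_0)
    thus ?thesis using K lam by (simp add: site_scale_def)
  qed
  finally show ?thesis .
qed

lemma shifted_Pi_green_last:
  assumes L: "3 \<le> L" and lam: "lam > 0" and r: "0 < r" "r < 1" and s: "1 \<le> s" "s \<le> L"
  shows "(\<Sum>j\<in>{1..L}. shifted_Pi L lam (level lam r) L j * green L lam r j s) = (if L = s then 1 else 0)"
proof -
  define N where "N = 2 * (L - 1)"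
  define K where "K = green_norm lam N r"
  define g where "g = refl_pow N r"
  have K: "K > 0" unfolding K_def N_def using green_norm_pos[OF r _ lam] L by auto
  have a1: "shifted_Pi L lam (level lam r) L (L - 1) = - lam * sqrt 2 / 4"
  proof -
    have "Pi_entry L L (L - 1) = Pi_entry L (L - 1) (L - 1 + 1)"
      using L Pi_entry_commute[of L L "L - 1"] by simp
    thus ?thesis using L Pi_entry_succ[of "L - 1" L] unfolding shifted_Pi_def by (simp add: one_div_two_sqrt2)
  qed
  have d: "nat_dist L s = L - s" "nat_dist (L + 1) s = L + 1 - s" using s by (auto simp: nat_dist_def)
  have "g (N - (L - s)) = g (L - s)" "g (N - (L + 1 - s)) = g (L + 1 - s)"
    unfolding g_def by (rule refl_pow_reflect, use s L in \<open>simp add: N_def\<close>)+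
  moreover have "N - (L - s) = L + s - 2" "N - (L + 1 - s) = L - 1 + s - 2" using s L by (auto simp: N_def)
  ultimately have h: "g (L + s - 2) = g (nat_dist L s)" "g (L - 1 + s - 2) = g (nat_dist (L + 1) s)"
    unfolding d by simp_all
  have g1: "green L lam r L s = site_scale L s * (2 * g (nat_dist L s)) / (2 * K)"
    unfolding green_def image_kernel_def N_def[symmetric] K_def[symmetric] g_def[symmetric] h
    by (simp add: site_scale_def)
  have g2: "green L lam r (L - 1) s
      = sqrt 2 * site_scale L s * (g (nat_dist (L - 1) s) + g (nat_dist (L + 1) s)) / (2 * K)"
    unfolding green_def image_kernel_def N_def[symmetric] K_def[symmetric] g_def[symmetric] h
    using L by (auto simp: site_scale_def)
  have "(\<Sum>j\<in>{1..L}. shifted_Pi L lam (level lam r) L j * green L lam r j s)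
     = shifted_Pi L lam (level lam r) L (L - 1) * green L lam r (L - 1) s
       + shifted_Pi L lam (level lam r) L L * green L lam r L s"
    by (rule sum_support_last) (use L in \<open>auto simp: shifted_Pi_far\<close>)
  also have "\<dots> = lam * site_scale L s / (4 * K)
      * ((r + 1/r) * g (nat_dist L s) - g (nat_dist (L - 1) s) - g (nat_dist (L + 1) s))"
    unfolding shifted_Pi_level_diag a1 g1 g2 using K by (simp add: field_simps sqrt2_mult_sqrt2)
  also have "\<dots> = (if L = s then 1 else 0)"
  proof -
    have "nat_dist L s < N" using s L by (auto simp: nat_dist_def N_def)
    from refl_pow_second_difference[OF r(1) lam _ this] L
    have "(r + 1/r) * g (nat_dist L s) - g (nat_dist (L - 1) s) - g (nat_dist (L + 1) s)
        = (if L = s then 4 * K / lam else 0)" unfolding g_def K_def by simp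
    thus ?thesis using K lam by (simp add: site_scale_def)
  qed
  finally show ?thesis .
qed

lemma shifted_Pi_green_adjacent:
  assumes i: "2 \<le> i" "i + 1 \<le> L" and j: "j = i - 1 \<or> j = i + 1"
  shows "shifted_Pi L lam y i j * green L lam r j s
    = - lam * sqrt 2 / 4 * site_scale L s * image_kernel L r j s / (2 * green_norm lam (2 * (L - 1)) r)"
proof -
  have "shifted_Pi L lam y i j * green L lam r j s
    = lam * (Pi_entry L i j * site_scale L j) * site_scale L s * image_kernel L r j s
      / (2 * green_norm lam (2 * (L - 1)) r)"
    unfolding shifted_Pi_def green_def using i j by auto
  thus ?thesis using j Pi_entry_pred_scale[OF i] Pi_entry_succ_scale[OF i] by auto
qed

lemma shifted_Pi_green_inner:
  assumes L: "3 \<le> L" and lam: "lam > 0" and r: "0 < r" "r < 1" and s: "1 \<le> s" "s \<le> L"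
    and i: "2 \<le> i" "i + 1 \<le> L"
  shows "(\<Sum>j\<in>{1..L}. shifted_Pi L lam (level lam r) i j * green L lam r j s) = (if i = s then 1 else 0)"
proof -
  define N where "N = 2 * (L - 1)"
  define K where "K = green_norm lam N r"
  define g where "g = refl_pow N r"
  define c where "c = r + 1 / r"
  have K: "K > 0" unfolding K_def N_def using green_norm_pos[OF r _ lam] L by auto
  have e: "i - 1 + s - 2 = i + s - 2 - 1" "i + 1 + s - 2 = i + s - 2 + 1" using i s by auto
  have t1: "shifted_Pi L lam (level lam r) i (i - 1) * green L lam r (i - 1) s
      = - lam * sqrt 2 / 4 * site_scale L s * (g (nat_dist (i - 1) s) + g (i + s - 2 - 1)) / (2 * K)"
    using shifted_Pi_green_adjacent[OF i, of "i - 1" lam "level lam r" r s]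
    unfolding image_kernel_def e N_def[symmetric] K_def[symmetric] g_def by simp
  have t3: "shifted_Pi L lam (level lam r) i (i + 1) * green L lam r (i + 1) s
      = - lam * sqrt 2 / 4 * site_scale L s * (g (nat_dist (i + 1) s) + g (i + s - 2 + 1)) / (2 * K)"
    using shifted_Pi_green_adjacent[OF i, of "i + 1" lam "level lam r" r s]
    unfolding image_kernel_def e N_def[symmetric] K_def[symmetric] g_def by simp
  have si: "site_scale L i = sqrt 2" using i unfolding site_scale_def by auto
  have t2: "green L lam r i s = sqrt 2 * site_scale L s * (g (nat_dist i s) + g (i + s - 2)) / (2 * K)"
    unfolding green_def image_kernel_def N_def[symmetric] K_def[symmetric] g_def si by simp
  have images: "g (i + s - 2 - 1) + g (i + s - 2 + 1) = c * g (i + s - 2)"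
    unfolding c_def g_def by (rule refl_pow_rec) (use r s i N_def in auto)
  have "(\<Sum>j\<in>{1..L}. shifted_Pi L lam (level lam r) i j * green L lam r j s)
     = shifted_Pi L lam (level lam r) i (i - 1) * green L lam r (i - 1) s
       + shifted_Pi L lam (level lam r) i i * green L lam r i s
       + shifted_Pi L lam (level lam r) i (i + 1) * green L lam r (i + 1) s"
    by (rule sum_support_around) (use i in \<open>auto simp: shifted_Pi_far\<close>)
  also have "\<dots> = lam * sqrt 2 * site_scale L s / (8 * K)
        * (c * g (nat_dist i s) - g (nat_dist (i - 1) s) - g (nat_dist (i + 1) s))
      + lam * sqrt 2 * site_scale L s / (8 * K)
        * (c * g (i + s - 2) - (g (i + s - 2 - 1) + g (i + s - 2 + 1)))"
    unfolding shifted_Pi_level_diag t1 t2 t3 c_def using K by (simp add: field_simps)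
  also have "\<dots> = lam * sqrt 2 * site_scale L s / (8 * K)
        * (c * g (nat_dist i s) - g (nat_dist (i - 1) s) - g (nat_dist (i + 1) s))"
    unfolding images by simp
  also have "\<dots> = (if i = s then 1 else 0)"
  proof -
    have "nat_dist i s < N" using s i by (auto simp: nat_dist_def N_def)
    from refl_pow_second_difference[OF r(1) lam _ this] i
    have "c * g (nat_dist i s) - g (nat_dist (i - 1) s) - g (nat_dist (i + 1) s)
        = (if i = s then 4 * K / lam else 0)" unfolding g_def K_def c_def by simp
    thus ?thesis using K lam si by (auto simp: field_simps)
  qed
  finally show ?thesis .
qed

lemma shifted_Pi_green:
  assumes L: "3 \<le> L" and lam: "lam > 0" and r: "0 < r" "r < 1"
    and i: "i \<in> {1..L}" and s: "s \<in> {1..L}"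
  shows "(\<Sum>j\<in>{1..L}. shifted_Pi L lam (level lam r) i j * green L lam r j s) = (if i = s then 1 else 0)"
proof -
  consider "i = 1" | "i = L" | "2 \<le> i \<and> i + 1 \<le> L" using i by force
  thus ?thesis using s
    by cases (use shifted_Pi_green_first[OF L lam r] shifted_Pi_green_last[OF L lam r]
                  shifted_Pi_green_inner[OF L lam r] in auto)
qed

lemma eigvec_eq_green_sum:
  assumes L: "3 \<le> L" and lam: "lam > 0" and r: "0 < r" "r < 1"
    and eq: "\<And>i. i \<in> {1..L} \<Longrightarrow> (\<Sum>j\<in>{1..L}. shifted_Pi L lam (level lam r) i j * w j) = D i * w i"
    and s: "s \<in> {1..L}"
  shows "w s = (\<Sum>t\<in>{1..L}. green L lam r s t * D t * w t)"
proof -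
  have "w s = (\<Sum>i\<in>{1..L}. if i = s then w i else 0)"
    using s by simp
  also have "\<dots> = (\<Sum>i\<in>{1..L}. (\<Sum>j\<in>{1..L}. shifted_Pi L lam (level lam r) j i * green L lam r j s) * w i)"
    by (rule sum.cong) (use shifted_Pi_green[OF L lam r _ s] in \<open>auto simp: shifted_Pi_commute\<close>)
  also have "\<dots> = (\<Sum>i\<in>{1..L}. \<Sum>j\<in>{1..L}. green L lam r j s * (shifted_Pi L lam (level lam r) j i * w i))"
    by (simp add: sum_distrib_left sum_distrib_right mult_ac)
  also have "\<dots> = (\<Sum>j\<in>{1..L}. \<Sum>i\<in>{1..L}. green L lam r j s * (shifted_Pi L lam (level lam r) j i * w i))"
    by (rule sum.swap)
  also have "\<dots> = (\<Sum>j\<in>{1..L}. green L lam r j s * (\<Sum>i\<in>{1..L}. shifted_Pi L lam (level lam r) j i * w i))"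
    by (simp add: sum_distrib_left)
  also have "\<dots> = (\<Sum>t\<in>{1..L}. green L lam r s t * D t * w t)"
  proof (rule sum.cong)
    fix t assume "t \<in> {1..L}"
    from eq[OF this]
    show "green L lam r t s * (\<Sum>i\<in>{1..L}. shifted_Pi L lam (level lam r) t i * w i)
        = green L lam r s t * D t * w t" by (simp add: green_commute)
  qed simp
  finally show ?thesis .
qed

section \<open>Symmetric two-by-two matrices\<close>

definition qform :: "real \<Rightarrow> real \<Rightarrow> real \<Rightarrow> real \<Rightarrow> real \<Rightarrow> real" where
  "qform a b c x y = a * x\<^sup>2 + 2 * b * x * y + c * y\<^sup>2"

definition top_eig2 :: "real \<Rightarrow> real \<Rightarrow> real \<Rightarrow> real" where
  "top_eig2 a b c = (a + c) / 2 + sqrt (((a - c) / 2)\<^sup>2 + b\<^sup>2)"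

lemma top_eig2_commute: "top_eig2 a b c = top_eig2 c b a"
proof -
  have "((a - c) / 2)\<^sup>2 = ((c - a) / 2)\<^sup>2" by (simp add: power2_eq_square algebra_simps)
  thus ?thesis unfolding top_eig2_def by (simp add: add.commute)
qed

lemma qform_le_top_eig2: "qform a b c x y \<le> top_eig2 a b c * (x\<^sup>2 + y\<^sup>2)"
proof -
  define s where "s = sqrt (((a - c) / 2)\<^sup>2 + b\<^sup>2)"
  define d where "d = (a - c) / 2"
  define p where "p = s - d"
  define q where "q = s + d"
  have "\<bar>d\<bar> \<le> s" unfolding s_def d_def by (rule real_sqrt_ge_abs1)
  hence p0: "p \<ge> 0" and q0: "q \<ge> 0" unfolding p_def q_def by auto
  have "s\<^sup>2 = d\<^sup>2 + b\<^sup>2" unfolding s_def d_def by simp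
  hence "p * q = b\<^sup>2" unfolding p_def q_def by (simp add: power2_eq_square algebra_simps)
  hence spq: "sqrt p * sqrt q = \<bar>b\<bar>" using p0 q0 by (simp add: real_sqrt_mult[symmetric])
  have "0 \<le> (sqrt p * \<bar>x\<bar> - sqrt q * \<bar>y\<bar>)\<^sup>2" by simp
  also have "\<dots> = p * x\<^sup>2 + q * y\<^sup>2 - 2 * (sqrt p * sqrt q) * (\<bar>x\<bar> * \<bar>y\<bar>)"
    using p0 q0 by (simp add: power2_eq_square algebra_simps)
  finally have h: "2 * \<bar>b\<bar> * (\<bar>x\<bar> * \<bar>y\<bar>) \<le> p * x\<^sup>2 + q * y\<^sup>2" unfolding spq by simp
  have "b * x * y \<le> \<bar>b\<bar> * (\<bar>x\<bar> * \<bar>y\<bar>)" by (metis abs_ge_self abs_mult mult.assoc)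
  hence "qform a b c x y \<le> a * x\<^sup>2 + c * y\<^sup>2 + p * x\<^sup>2 + q * y\<^sup>2"
    unfolding qform_def using h by linarith
  also have "\<dots> = top_eig2 a b c * (x\<^sup>2 + y\<^sup>2)"
    unfolding top_eig2_def p_def q_def s_def[symmetric] d_def by (simp add: field_simps)
  finally show ?thesis .
qed

lemma top_eig2_ge_of_qform:
  assumes "x \<noteq> 0 \<or> y \<noteq> 0" and "m * (x\<^sup>2 + y\<^sup>2) \<le> qform a b c x y"
  shows "m \<le> top_eig2 a b c"
proof -
  have "m * (x\<^sup>2 + y\<^sup>2) \<le> top_eig2 a b c * (x\<^sup>2 + y\<^sup>2)"
    using assms(2) qform_le_top_eig2 order_trans by blast
  moreover have "x\<^sup>2 + y\<^sup>2 > 0" using assms(1) by (simp add: sum_power2_gt_zero_iff)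
  ultimately show ?thesis by simp
qed

lemma top_eig2_eq_imp_det:
  assumes "top_eig2 a b c = m"
  shows "b\<^sup>2 = (m - a) * (m - c)"
proof -
  have "sqrt (((a - c) / 2)\<^sup>2 + b\<^sup>2) = m - (a + c) / 2" using assms unfolding top_eig2_def by simp
  hence "((a - c) / 2)\<^sup>2 + b\<^sup>2 = (m - (a + c) / 2)\<^sup>2"
    by (metis abs_of_nonneg real_sqrt_abs real_sqrt_ge_zero real_sqrt_pow2 zero_le_power2 add_nonneg_nonneg)
  thus ?thesis by (simp add: power2_eq_square field_simps)
qed

lemma max_le_top_eig2: "max a c \<le> top_eig2 a b c"
  using real_sqrt_ge_abs1[of "(a - c) / 2" b] unfolding top_eig2_def by (simp add: abs_le_iff max_def field_simps)

lemma mean_add_abs_le_top_eig2: "(a + c) / 2 + \<bar>b\<bar> \<le> top_eig2 a b c"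
  using real_sqrt_ge_abs2[of "(a - c) / 2" b] unfolding top_eig2_def by simp

lemma top_eig2_le_max_add_abs: "top_eig2 a b c \<le> max a c + \<bar>b\<bar>"
  using sqrt_sum_squares_le_sum_abs[of "(a - c) / 2" b] unfolding top_eig2_def
  by (simp add: abs_if max_def field_simps split: if_splits)

lemma top_eig2_mono_left:
  assumes "a \<le> a'"
  shows "top_eig2 a b c \<le> top_eig2 a' b c"
proof -
  have e: "(a' - c) / 2 + (a - a') / 2 = (a - c) / 2" by (simp add: field_simps)
  have "sqrt (((a - c) / 2)\<^sup>2 + b\<^sup>2) \<le> sqrt (((a' - c) / 2)\<^sup>2 + b\<^sup>2) + sqrt (((a - a') / 2)\<^sup>2 + 0\<^sup>2)"
    using real_sqrt_sum_squares_triangle_ineq[of "(a' - c) / 2" "(a - a') / 2" b 0] unfolding e by simp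
  also have "sqrt (((a - a') / 2)\<^sup>2 + 0\<^sup>2) = (a' - a) / 2" using assms by simp
  finally show ?thesis unfolding top_eig2_def by (simp add: field_simps)
qed

lemma top_eig2_mono:
  assumes "a \<le> a'" "\<bar>b\<bar> \<le> \<bar>b'\<bar>" "c \<le> c'"
  shows "top_eig2 a b c \<le> top_eig2 a' b' c'"
proof -
  have "top_eig2 a b c \<le> top_eig2 a' b c" by (rule top_eig2_mono_left[OF assms(1)])
  also have "\<dots> = top_eig2 c b a'" by (rule top_eig2_commute)
  also have "\<dots> \<le> top_eig2 c' b a'" by (rule top_eig2_mono_left[OF assms(3)])
  also have "\<dots> \<le> top_eig2 c' b' a'"
    using assms(2) unfolding top_eig2_def by (simp add: abs_le_square_iff)
  also have "\<dots> = top_eig2 a' b' c'" by (rule top_eig2_commute)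
  finally show ?thesis .
qed

lemma qform_fixed_point:
  assumes "m * x = a * x + b * y" and "m * y = b * x + c * y" and "b \<ge> 0"
  shows "m * (\<bar>x\<bar>\<^sup>2 + \<bar>y\<bar>\<^sup>2) \<le> qform a b c \<bar>x\<bar> \<bar>y\<bar>"
proof -
  have "m * (x\<^sup>2 + y\<^sup>2) = (m * x) * x + (m * y) * y" by (simp add: power2_eq_square algebra_simps)
  also have "\<dots> = qform a b c x y" unfolding assms(1,2) qform_def by (simp add: power2_eq_square algebra_simps)
  finally have "m * (x\<^sup>2 + y\<^sup>2) = qform a b c x y" .
  moreover have "b * (x * y) \<le> b * (\<bar>x\<bar> * \<bar>y\<bar>)"
    using assms(3) by (intro mult_left_mono) (auto simp: abs_mult[symmetric])
  ultimately show ?thesis unfolding qform_def by (simp add: algebra_simps)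
qed

section \<open>Reduction to the neighbours of the occupied site\<close>

definition ph_support :: "nat \<Rightarrow> nat \<Rightarrow> nat set" where
  "ph_support L k = {t \<in> {1..L}. t + 1 = k \<or> t = k + 1}"

text \<open>The diagonal of \<open>Piph_mat L a\<close> when \<open>a\<close> has its single \<open>1\<close> at site \<open>k\<close>.\<close>
definition ph_diag :: "nat \<Rightarrow> nat \<Rightarrow> nat \<Rightarrow> real" where
  "ph_diag L k t = (if t \<in> ph_support L k then 1 / (site_scale L t)\<^sup>2 else 0)"

lemma scaled_eigvec_eq_kernel_sum:
  assumes L: "3 \<le> L" and lam: "lam > 0" and r: "0 < r" "r < 1"
    and eq: "\<And>i. i \<in> {1..L} \<Longrightarrow>
      (\<Sum>j\<in>{1..L}. shifted_Pi L lam (level lam r) i j * w j) = ph_diag L k i * w i"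
    and s: "s \<in> {1..L}"
  shows "2 * green_norm lam (2 * (L - 1)) r * (w s / site_scale L s)
    = (\<Sum>t\<in>ph_support L k. image_kernel L r s t * (w t / site_scale L t))"
proof -
  define K where "K = green_norm lam (2 * (L - 1)) r"
  have K: "K > 0" unfolding K_def using green_norm_pos[OF r _ lam] L by auto
  have "w s = (\<Sum>t\<in>{1..L}. green L lam r s t * ph_diag L k t * w t)"
    by (rule eigvec_eq_green_sum[OF L lam r eq s])
  also have "\<dots> = (\<Sum>t\<in>{1..L}. if t \<in> ph_support L k
      then site_scale L s / (2 * K) * (image_kernel L r s t * (w t / site_scale L t)) else 0)"
  proof (rule sum.cong)
    fix t
    have "site_scale L t > 0" by (rule site_scale_pos)
    thus "green L lam r s t * ph_diag L k t * w t = (if t \<in> ph_support L k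
      then site_scale L s / (2 * K) * (image_kernel L r s t * (w t / site_scale L t)) else 0)"
      unfolding green_def ph_diag_def K_def[symmetric] by (simp add: field_simps power2_eq_square)
  qed simp
  also have "\<dots> = site_scale L s / (2 * K) * (\<Sum>t\<in>ph_support L k. image_kernel L r s t * (w t / site_scale L t))"
    by (simp add: sum.inter_filter[symmetric] sum_distrib_left ph_support_def)
  finally show ?thesis
    using K site_scale_pos[of L s] unfolding K_def[symmetric] by (simp add: field_simps)
qed

lemma eigvec_nonzero_on_support:
  assumes L: "3 \<le> L" and lam: "lam > 0" and r: "0 < r" "r < 1"
    and eq: "\<And>i. i \<in> {1..L} \<Longrightarrow>
      (\<Sum>j\<in>{1..L}. shifted_Pi L lam (level lam r) i j * w j) = ph_diag L k i * w i"
    and nz: "\<exists>s\<in>{1..L}. w s \<noteq> 0"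
  shows "\<exists>t\<in>ph_support L k. w t \<noteq> 0"
proof (rule ccontr)
  assume "\<not> ?thesis"
  hence "w s = 0" if "s \<in> {1..L}" for s
    using eigvec_eq_green_sum[OF L lam r eq that] by (auto simp: ph_diag_def intro!: sum.neutral)
  thus False using nz by blast
qed

lemma two_green_norm_eq_kernel_single:
  assumes L: "3 \<le> L" and lam: "lam > 0" and r: "0 < r" "r < 1"
    and eq: "\<And>i. i \<in> {1..L} \<Longrightarrow>
      (\<Sum>j\<in>{1..L}. shifted_Pi L lam (level lam r) i j * w j) = ph_diag L k i * w i"
    and supp: "ph_support L k = {t}" and nz: "w t \<noteq> 0"
  shows "2 * green_norm lam (2 * (L - 1)) r = image_kernel L r t t"
proof -
  have "t \<in> {1..L}" using supp unfolding ph_support_def by blast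
  from scaled_eigvec_eq_kernel_sum[OF L lam r eq this]
  have "2 * green_norm lam (2 * (L - 1)) r * (w t / site_scale L t)
      = image_kernel L r t t * (w t / site_scale L t)" unfolding supp by simp
  moreover have "w t / site_scale L t \<noteq> 0" using nz site_scale_pos[of L t] by simp
  ultimately show ?thesis by simp
qed

lemma two_green_norm_le_top_eig2_pair:
  assumes L: "3 \<le> L" and lam: "lam > 0" and r: "0 < r" "r < 1"
    and eq: "\<And>i. i \<in> {1..L} \<Longrightarrow>
      (\<Sum>j\<in>{1..L}. shifted_Pi L lam (level lam r) i j * w j) = ph_diag L k i * w i"
    and supp: "ph_support L k = {k - 1, k + 1}" and k: "2 \<le> k"
    and nz: "w (k - 1) \<noteq> 0 \<or> w (k + 1) \<noteq> 0"
  shows "2 * green_norm lam (2 * (L - 1)) r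
    \<le> top_eig2 (image_kernel L r (k - 1) (k - 1)) (image_kernel L r (k - 1) (k + 1))
               (image_kernel L r (k + 1) (k + 1))"
proof -
  define u1 where "u1 = w (k - 1) / site_scale L (k - 1)"
  define u2 where "u2 = w (k + 1) / site_scale L (k + 1)"
  have mem: "k - 1 \<in> {1..L}" "k + 1 \<in> {1..L}" using supp unfolding ph_support_def by blast+
  have ne: "k - 1 \<noteq> k + 1" by simp
  have e1: "2 * green_norm lam (2 * (L - 1)) r * u1
      = image_kernel L r (k - 1) (k - 1) * u1 + image_kernel L r (k - 1) (k + 1) * u2"
    using scaled_eigvec_eq_kernel_sum[OF L lam r eq mem(1)] ne unfolding supp u1_def u2_def by simp
  have e2: "2 * green_norm lam (2 * (L - 1)) r * u2
      = image_kernel L r (k - 1) (k + 1) * u1 + image_kernel L r (k + 1) (k + 1) * u2"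
    using scaled_eigvec_eq_kernel_sum[OF L lam r eq mem(2)] ne
    unfolding supp u1_def u2_def by (simp add: image_kernel_commute)
  have "0 \<le> image_kernel L r (k - 1) (k + 1)"
    unfolding image_kernel_def using refl_pow_pos[OF r(1)] by (simp add: add_nonneg_nonneg less_imp_le)
  from qform_fixed_point[OF e1 e2 this] show ?thesis
    by (rule top_eig2_ge_of_qform[rotated])
       (use nz site_scale_pos[of L "k - 1"] site_scale_pos[of L "k + 1"] in \<open>auto simp: u1_def u2_def\<close>)
qed

lemma image_kernel_diag:
  "image_kernel L r t t = refl_pow (2 * (L - 1)) r 0 + refl_pow (2 * (L - 1)) r (2 * t - 2)"
  unfolding image_kernel_def nat_dist_def by (simp add: mult_2)

lemma image_kernel_around:
  assumes "2 \<le> k"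
  shows "image_kernel L r (k - 1) (k - 1) = refl_pow (2 * (L - 1)) r 0 + refl_pow (2 * (L - 1)) r (2 * k - 4)"
    and "image_kernel L r (k - 1) (k + 1) = refl_pow (2 * (L - 1)) r 2 + refl_pow (2 * (L - 1)) r (2 * k - 2)"
    and "image_kernel L r (k + 1) (k + 1) = refl_pow (2 * (L - 1)) r 0 + refl_pow (2 * (L - 1)) r (2 * k)"
proof -
  have "nat_dist (k - 1) (k + 1) = 2" "k - 1 + (k + 1) - 2 = 2 * k - 2" "2 * (k - 1) - 2 = 2 * k - 4"
    using assms by (auto simp: nat_dist_def)
  thus "image_kernel L r (k - 1) (k - 1) = refl_pow (2 * (L - 1)) r 0 + refl_pow (2 * (L - 1)) r (2 * k - 4)"
    and "image_kernel L r (k - 1) (k + 1) = refl_pow (2 * (L - 1)) r 2 + refl_pow (2 * (L - 1)) r (2 * k - 2)"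
    and "image_kernel L r (k + 1) (k + 1) = refl_pow (2 * (L - 1)) r 0 + refl_pow (2 * (L - 1)) r (2 * k)"
    using image_kernel_diag[of L r "k - 1"] image_kernel_diag[of L r "k + 1"]
    unfolding image_kernel_def[of L r "k - 1" "k + 1"] by simp_all
qed

lemma image_kernel_sites_1_3:
  "image_kernel L r 1 1 = 2 * refl_pow (2 * (L - 1)) r 0"
  "image_kernel L r 1 3 = 2 * refl_pow (2 * (L - 1)) r 2"
  "image_kernel L r 3 3 = refl_pow (2 * (L - 1)) r 0 + refl_pow (2 * (L - 1)) r 4"
  unfolding image_kernel_def nat_dist_def by simp_all

lemma image_kernel_diag_le_top_eig2:
  assumes r: "0 < r" "r < 1" and t: "t \<le> L"
  shows "image_kernel L r t t \<le> top_eig2 (image_kernel L r 1 1) (image_kernel L r 1 3) (image_kernel L r 3 3)"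
proof -
  have "image_kernel L r t t \<le> image_kernel L r 1 1"
    unfolding image_kernel_diag using refl_pow_le_zero[OF r, of "2 * t - 2" "2 * (L - 1)"] t by simp
  also have "\<dots> \<le> top_eig2 (image_kernel L r 1 1) (image_kernel L r 1 3) (image_kernel L r 3 3)"
    using max_le_top_eig2 by (rule max.boundedE)
  finally show ?thesis .
qed

lemma top_eig2_kernel_pair_le:
  assumes r: "0 < r" "r < 1" and k: "3 \<le> k" "k + 1 \<le> L"
  shows "top_eig2 (image_kernel L r (k - 1) (k - 1)) (image_kernel L r (k - 1) (k + 1))
                  (image_kernel L r (k + 1) (k + 1))
    \<le> top_eig2 (image_kernel L r 1 1) (image_kernel L r 1 3) (image_kernel L r 3 3)"
proof -
  define N where "N = 2 * (L - 1)"
  define g where "g = refl_pow N r"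
  have k2: "2 \<le> k" using k by simp
  note ABC = image_kernel_around[of k L r, folded N_def g_def] and P = image_kernel_sites_1_3[of L r, folded N_def g_def]
  have antimono: "\<And>a t. a \<le> t \<Longrightarrow> t + a \<le> N \<Longrightarrow> g t \<le> g a"
    unfolding g_def by (rule refl_pow_antimono[OF r])
  have A0: "g (2 * k - 4) \<le> g 0" and C0: "g (2 * k) \<le> g 0" and B2: "g (2 * k - 2) \<le> g 2"
    using k by (auto simp: N_def intro!: antimono)
  have gpos: "0 < g t" for t unfolding g_def by (rule refl_pow_pos[OF r(1)])
  have Babs: "\<bar>g 2 + g (2 * k - 2)\<bar> \<le> \<bar>2 * g 2\<bar>" using B2 gpos[of 2] gpos[of "2 * k - 2"] by simp
  consider "k + 3 \<le> L" | "4 \<le> k \<or> L = 4" | "k = 3" "L = 5" using k by linarith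
  thus ?thesis
  proof cases
    case 1
    have "g (2 * k) \<le> g 4" using 1 k by (auto simp: N_def intro!: antimono)
    thus ?thesis unfolding ABC[OF k2] P using A0 Babs by (intro top_eig2_mono) auto
  next
    case 2
    have "g (2 * k - 4) \<le> g 4"
    proof (cases "4 \<le> k")
      case True thus ?thesis using k by (auto simp: N_def intro!: antimono)
    next
      case False
      hence "k = 3" "N = 6" using 2 k by (auto simp: N_def)
      thus ?thesis using refl_pow_reflect[of 4 N r] unfolding g_def by simp
    qed
    hence "top_eig2 (g 0 + g (2 * k)) (g 2 + g (2 * k - 2)) (g 0 + g (2 * k - 4))
        \<le> top_eig2 (2 * g 0) (2 * g 2) (g 0 + g 4)"
      using C0 Babs by (intro top_eig2_mono) auto
    thus ?thesis unfolding ABC[OF k2] P by (simp add: top_eig2_commute)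
  next
    case 3
    \<comment> \<open>Neither orientation of the block is dominated entrywise, but its diagonal entries coincide.\<close>
    have "N = 8" using 3 by (simp add: N_def)
    hence g62: "g 6 = g 2" using refl_pow_reflect[of 2 N r] unfolding g_def by simp
    have "top_eig2 (g 0 + g 2) (g 2 + g 4) (g 0 + g 2) \<le> g 0 + g 2 + \<bar>g 2 + g 4\<bar>"
      using top_eig2_le_max_add_abs[of "g 0 + g 2" "g 2 + g 4" "g 0 + g 2"] by simp
    also have "\<dots> \<le> (2 * g 0 + (g 0 + g 4)) / 2 + \<bar>2 * g 2\<bar>"
      using gpos[of 2] gpos[of 4] antimono[of 0 4] \<open>N = 8\<close> by simp
    also have "\<dots> \<le> top_eig2 (2 * g 0) (2 * g 2) (g 0 + g 4)"
      by (rule mean_add_abs_le_top_eig2)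
    finally show ?thesis unfolding ABC[OF k2] P using 3 g62 by simp
  qed
qed

lemma two_green_norm_le_top_eig2:
  assumes L: "3 \<le> L" and lam: "lam > 0" and r: "0 < r" "r < 1"
    and k: "k \<in> {1..L}" "k \<noteq> 2"
    and eq: "\<And>i. i \<in> {1..L} \<Longrightarrow>
      (\<Sum>j\<in>{1..L}. shifted_Pi L lam (level lam r) i j * w j) = ph_diag L k i * w i"
    and nz: "\<exists>s\<in>{1..L}. w s \<noteq> 0"
  shows "2 * green_norm lam (2 * (L - 1)) r
    \<le> top_eig2 (image_kernel L r 1 1) (image_kernel L r 1 3) (image_kernel L r 3 3)"
proof -
  obtain t where t: "t \<in> ph_support L k" "w t \<noteq> 0"
    using eigvec_nonzero_on_support[OF L lam r eq nz] by blast
  consider "k = 1" | "k = L" | "3 \<le> k" "k + 1 \<le> L" using k by force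
  thus ?thesis
  proof cases
    case 1
    hence supp: "ph_support L k = {2}" using L unfolding ph_support_def by auto
    show ?thesis
      using two_green_norm_eq_kernel_single[OF L lam r eq supp] t image_kernel_diag_le_top_eig2[OF r, of 2 L] L
      unfolding supp by simp
  next
    case 2
    hence supp: "ph_support L k = {L - 1}" using L unfolding ph_support_def by auto
    show ?thesis
      using two_green_norm_eq_kernel_single[OF L lam r eq supp] t image_kernel_diag_le_top_eig2[OF r, of "L - 1" L]
      unfolding supp by simp
  next
    case 3
    hence supp: "ph_support L k = {k - 1, k + 1}" unfolding ph_support_def by auto
    have "w (k - 1) \<noteq> 0 \<or> w (k + 1) \<noteq> 0" using t unfolding supp by blast
    from two_green_norm_le_top_eig2_pair[OF L lam r eq supp _ this] 3
    show ?thesis using top_eig2_kernel_pair_le[OF r 3] by linarith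
  qed
qed

section \<open>The comparison function\<close>

lemma level_pos: "lam > 0 \<Longrightarrow> 0 < r \<Longrightarrow> r < 1 \<Longrightarrow> level lam r > 0"
proof -
  assume a: "lam > 0" "0 < r" "r < 1"
  have "level lam r = lam * (1 - r)\<^sup>2 / (4 * r)"
    unfolding level_def using a by (simp add: field_simps power2_eq_square)
  thus ?thesis using a by simp
qed

lemma level_antimono:
  assumes lam: "lam > 0" and r: "0 < r1" "r1 \<le> r2" "r2 \<le> 1"
  shows "level lam r2 \<le> level lam r1"
proof -
  have "r1 + 1 / r1 - (r2 + 1 / r2) = (r2 - r1) * (1 - r1 * r2) / (r1 * r2)"
    using r by (simp add: field_simps)
  moreover have "r1 * r2 \<le> 1" by (rule mult_le_one) (use r in auto)
  ultimately have "0 \<le> r1 + 1 / r1 - (r2 + 1 / r2)" using r by simp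
  thus ?thesis unfolding level_def using lam by simp
qed

lemma level_surj:
  assumes lam: "lam > 0" and y: "y > 0"
  shows "\<exists>r. 0 < r \<and> r < 1 \<and> level lam r = y"
proof -
  define \<beta> where "\<beta> = 2 + 4 * y / lam"
  have b2: "\<beta> > 2" unfolding \<beta>_def using lam y by simp
  define s where "s = sqrt (\<beta>\<^sup>2 - 4)"
  have "2 * 2 \<le> \<beta> * \<beta>" using b2 by (intro mult_mono) auto
  hence s2: "s\<^sup>2 = \<beta>\<^sup>2 - 4" and s0: "s \<ge> 0" unfolding s_def by (simp_all add: power2_eq_square)
  define r where "r = (\<beta> - s) / 2" \<comment> \<open>the smaller root of \<open>r + 1/r = \<beta>\<close>\<close>
  have "s < \<beta>" using power_less_imp_less_base[of s 2 \<beta>] s2 b2 by simp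
  hence r0: "r > 0" unfolding r_def by simp
  have "(\<beta> - 2)\<^sup>2 < s\<^sup>2" using s2 b2 by (simp add: power2_eq_square algebra_simps)
  hence "\<beta> - 2 < s" using power_less_imp_less_base[of "\<beta> - 2" 2 s] s0 by simp
  hence r1: "r < 1" unfolding r_def by simp
  have "r * ((\<beta> + s) / 2) = 1" unfolding r_def using s2 by (simp add: power2_eq_square field_simps)
  hence "1 / r = (\<beta> + s) / 2" using r0 by (simp add: field_simps)
  hence "r + 1 / r = \<beta>" unfolding r_def by (simp add: field_simps)
  hence "level lam r = y" unfolding level_def \<beta>_def using lam by (simp add: field_simps)
  thus ?thesis using r0 r1 by blast
qed

text \<open>The top eigenvalue of the block of the Green's function on the two sites next to site 2,
  in the scaled coordinates of \<open>scaled_eigvec_eq_kernel_sum\<close>.\<close>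
definition reduced_top :: "nat \<Rightarrow> real \<Rightarrow> real \<Rightarrow> real" where
  "reduced_top L lam r =
     top_eig2 (image_kernel L r 1 1) (image_kernel L r 1 3) (image_kernel L r 3 3)
       / (2 * green_norm lam (2 * (L - 1)) r)"

lemma one_le_reduced_top_iff:
  assumes "3 \<le> L" "lam > 0" "0 < r" "r < 1"
  shows "1 \<le> reduced_top L lam r \<longleftrightarrow>
    2 * green_norm lam (2 * (L - 1)) r \<le> top_eig2 (image_kernel L r 1 1) (image_kernel L r 1 3) (image_kernel L r 3 3)"
  using green_norm_pos[of r "2 * (L - 1)" lam] assms unfolding reduced_top_def by (simp add: le_divide_eq)

lemma reduced_top_continuous:
  assumes L: "3 \<le> L" and lam: "lam > 0" and S: "\<And>r. r \<in> S \<Longrightarrow> 0 < r \<and> r < 1"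
  shows "continuous_on S (reduced_top L lam)"
proof -
  have "\<forall>r\<in>S. 2 * green_norm lam (2 * (L - 1)) r \<noteq> 0"
    using green_norm_pos[of _ "2 * (L - 1)" lam] S L lam by fastforce
  moreover have "continuous_on S (\<lambda>r. refl_pow N r t)" for N t
    unfolding refl_pow_def by (intro continuous_intros)
  ultimately show ?thesis
    unfolding reduced_top_def[abs_def] top_eig2_def image_kernel_def green_norm_def
    using S by (intro continuous_intros) auto
qed

lemma reduced_top_le_one:
  assumes L: "3 \<le> L" and r: "0 < r" "r \<le> 1/2" and rl: "64 * r \<le> lam"
  shows "reduced_top L lam r \<le> 1"
proof -
  have K: "4 \<le> green_norm lam (2 * (L - 1)) r" by (rule green_norm_ge_four) (use r rl L in auto)
  have P: "0 \<le> image_kernel L r s t \<and> image_kernel L r s t \<le> 4" for s t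
  proof -
    have "r < 1" using r by simp
    from refl_pow_le_two[OF r(1) this] refl_pow_pos[OF r(1)]
    show ?thesis unfolding image_kernel_def by (smt (verit))
  qed
  have "top_eig2 (image_kernel L r 1 1) (image_kernel L r 1 3) (image_kernel L r 3 3) \<le> 8"
    using top_eig2_le_max_add_abs[of "image_kernel L r 1 1" "image_kernel L r 1 3" "image_kernel L r 3 3"]
      P[of 1 1] P[of 1 3] P[of 3 3] by linarith
  thus ?thesis unfolding reduced_top_def using K by simp
qed

lemma exists_one_le_reduced_top:
  assumes L: "3 \<le> L" and lam: "lam > 0"
  shows "\<exists>r. 0 < r \<and> r < 1 \<and> 1 \<le> reduced_top L lam r"
proof -
  define r where "r = (1 + lam) / (2 + lam)"
  define N where "N = 2 * (L - 1)"
  have r: "0 < r" "r < 1" unfolding r_def using lam by auto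
  have N: "1 \<le> N" using L N_def by simp
  have rN: "0 \<le> r ^ N" "r ^ N \<le> 1" using r by (auto intro: power_le_one)
  have "lam / 4 * (1 / r - r) = lam * (3 + 2 * lam) / (4 * ((1 + lam) * (2 + lam)))"
    unfolding r_def using lam by (simp add: field_simps)
  also have "\<dots> \<le> 1"
  proof -
    have "lam * (3 + 2 * lam) \<le> 4 * ((1 + lam) * (2 + lam))"
      using lam mult_nonneg_nonneg[of lam lam] by (simp add: algebra_simps)
    thus ?thesis using lam by (simp add: pos_divide_le_eq)
  qed
  finally have h: "lam / 4 * (1 / r - r) \<le> 1" .
  have "0 \<le> 1 / r - r" using r by (simp add: field_simps) (metis less_imp_le mult_le_one)
  hence "green_norm lam N r \<le> lam / 4 * (1 / r - r)"
    unfolding green_norm_eq[OF r(1) N] using lam rN by (simp add: mult_left_le)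
  also have "\<dots> \<le> refl_pow N r 0" using h rN unfolding refl_pow_def by simp
  finally have "2 * green_norm lam N r \<le> image_kernel L r 1 1"
    unfolding image_kernel_diag N_def by simp
  also have "\<dots> \<le> top_eig2 (image_kernel L r 1 1) (image_kernel L r 1 3) (image_kernel L r 3 3)"
    using max_le_top_eig2 by (rule max.boundedE)
  finally show ?thesis using r one_le_reduced_top_iff[OF L lam r] unfolding N_def by blast
qed

lemma reduced_top_eq_one_below:
  assumes L: "3 \<le> L" and lam: "lam > 0" and r: "0 < r" "r < 1" and F: "1 \<le> reduced_top L lam r"
  shows "\<exists>r'. 0 < r' \<and> r' \<le> r \<and> reduced_top L lam r' = 1"
proof -
  define r0 where "r0 = min r (min (1/2) (lam / 64))"
  have r0: "0 < r0" "r0 \<le> r" "r0 \<le> 1/2" "64 * r0 \<le> lam" using r lam unfolding r0_def by auto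
  have "reduced_top L lam r0 \<le> 1" by (rule reduced_top_le_one) (use r0 L in auto)
  moreover have "continuous_on {r0..r} (reduced_top L lam)"
    by (rule reduced_top_continuous[OF L lam]) (use r0 r in auto)
  ultimately obtain x where "r0 \<le> x" "x \<le> r" "reduced_top L lam x = 1"
    using IVT'[of "reduced_top L lam" r0 1 r] F r0 by auto
  thus ?thesis using r0 by (intro exI[of _ x]) auto
qed

definition real_eigvec :: "nat \<Rightarrow> (nat \<Rightarrow> nat \<Rightarrow> real) \<Rightarrow> real \<Rightarrow> (nat \<Rightarrow> real) \<Rightarrow> bool" where
  "real_eigvec L h x w \<longleftrightarrow>
     (\<exists>i\<in>{1..L}. w i \<noteq> 0) \<and> (\<forall>i\<in>{1..L}. (\<Sum>j\<in>{1..L}. h i j * w j) = x * w i)"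

definition ham :: "nat \<Rightarrow> real \<Rightarrow> nat \<Rightarrow> nat \<Rightarrow> nat \<Rightarrow> real" where
  "ham L lam k i j = (if i = j then ph_diag L k i else 0) - lam * Pi_entry L i j"

lemma ham_commute: "ham L lam k i j = ham L lam k j i"
  unfolding ham_def using Pi_entry_commute by auto

lemma sum_diag_mult:
  fixes F :: "nat \<Rightarrow> real"
  assumes "finite A" "i \<in> A"
  shows "(\<Sum>j\<in>A. (if i = j then c else 0) * F j) = c * F i"
proof -
  have "(\<Sum>j\<in>A. (if i = j then c else 0) * F j) = (\<Sum>j\<in>A. if i = j then c * F j else 0)"
    by (rule sum.cong) auto
  thus ?thesis using assms by simp
qed

lemma ham_eigvec_iff:
  assumes i: "i \<in> {1..L}"
  shows "(\<Sum>j\<in>{1..L}. ham L lam k i j * F j) = y * F i \<longleftrightarrow>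
    (\<Sum>j\<in>{1..L}. shifted_Pi L lam y i j * F j) = ph_diag L k i * F i"
proof -
  define PF where "PF = (\<Sum>j\<in>{1..L}. Pi_entry L i j * F j)"
  have "(\<Sum>j\<in>{1..L}. ham L lam k i j * F j) = ph_diag L k i * F i - lam * PF"
    unfolding ham_def PF_def left_diff_distrib sum_subtractf sum_diag_mult[OF finite_atLeastAtMost i]
    by (simp add: sum_distrib_left mult.assoc)
  moreover have "(\<Sum>j\<in>{1..L}. shifted_Pi L lam y i j * F j) = y * F i + lam * PF"
    unfolding shifted_Pi_def PF_def distrib_right sum.distrib sum_diag_mult[OF finite_atLeastAtMost i]
    by (simp add: sum_distrib_left mult.assoc)
  ultimately show ?thesis by auto
qed

lemma shifted_Pi_green_combination:
  assumes L: "3 \<le> L" and lam: "lam > 0" and r: "0 < r" "r < 1"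
    and i: "i \<in> {1..L}" and s: "s1 \<in> {1..L}" "s2 \<in> {1..L}"
  shows "(\<Sum>j\<in>{1..L}. shifted_Pi L lam (level lam r) i j * (\<alpha> * green L lam r j s1 + \<beta> * green L lam r j s2))
    = (if i = s1 then \<alpha> else 0) + (if i = s2 then \<beta> else 0)"
proof -
  have "(\<Sum>j\<in>{1..L}. shifted_Pi L lam (level lam r) i j * (\<alpha> * green L lam r j s1 + \<beta> * green L lam r j s2))
    = \<alpha> * (\<Sum>j\<in>{1..L}. shifted_Pi L lam (level lam r) i j * green L lam r j s1)
      + \<beta> * (\<Sum>j\<in>{1..L}. shifted_Pi L lam (level lam r) i j * green L lam r j s2)"
    by (simp add: sum_distrib_left sum.distrib algebra_simps)
  thus ?thesis using shifted_Pi_green[OF L lam r i s(1)] shifted_Pi_green[OF L lam r i s(2)] by simp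
qed

lemma ph_diag_site2:
  assumes "3 \<le> L"
  shows "ph_diag L 2 1 = 1" and "ph_diag L 2 3 = 1 / (site_scale L 3)\<^sup>2"
    and "i \<notin> {1, 3} \<Longrightarrow> ph_diag L 2 i = 0"
  using assms unfolding ph_diag_def ph_support_def by (auto simp: site_scale_def)

lemma site2_eigvec:
  assumes L: "3 \<le> L" and lam: "lam > 0" and r: "0 < r" "r < 1" and F: "reduced_top L lam r = 1"
  shows "\<exists>\<Phi>. real_eigvec L (ham L lam 2) (level lam r) \<Phi>"
proof -
  define m where "m = 2 * green_norm lam (2 * (L - 1)) r"
  define A where "A = image_kernel L r 1 1"
  define B where "B = image_kernel L r 1 3"
  define C where "C = image_kernel L r 3 3"
  define s3 where "s3 = site_scale L 3"
  define \<Phi> where "\<Phi> j = B * green L lam r j 1 + (m - A) / s3 * green L lam r j 3" for j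
  have m: "m > 0" unfolding m_def using green_norm_pos[OF r _ lam] L by auto
  have s3: "s3 > 0" unfolding s3_def by (rule site_scale_pos)
  have "top_eig2 A B C = m" using F m unfolding reduced_top_def A_def B_def C_def m_def by simp
  hence det: "B\<^sup>2 = (m - A) * (m - C)" by (rule top_eig2_eq_imp_det)
  have G: "green L lam r 1 1 = A / m" "green L lam r 1 3 = s3 * B / m"
    "green L lam r 3 1 = s3 * B / m" "green L lam r 3 3 = s3 * s3 * C / m"
    unfolding green_def A_def B_def C_def m_def s3_def by (simp_all add: site_scale_def image_kernel_commute)
  have P1: "\<Phi> 1 = B" unfolding \<Phi>_def G using m s3 by (simp add: field_simps)
  have "\<Phi> 3 = s3 * (B\<^sup>2 + (m - A) * C) / m"
    unfolding \<Phi>_def G using m s3 by (simp add: field_simps power2_eq_square)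
  also have "B\<^sup>2 + (m - A) * C = (m - A) * m" unfolding det by (simp add: algebra_simps)
  finally have P3: "\<Phi> 3 = s3 * (m - A)" using m by simp
  have "(\<Sum>j\<in>{1..L}. shifted_Pi L lam (level lam r) i j * \<Phi> j) = ph_diag L 2 i * \<Phi> i"
    if i: "i \<in> {1..L}" for i
  proof -
    have "(\<Sum>j\<in>{1..L}. shifted_Pi L lam (level lam r) i j * \<Phi> j)
      = (if i = 1 then B else 0) + (if i = 3 then (m - A) / s3 else 0)"
      unfolding \<Phi>_def by (rule shifted_Pi_green_combination[OF L lam r i]) (use L in auto)
    also have "\<dots> = ph_diag L 2 i * \<Phi> i"
    proof (cases "i = 3")
      case True
      have "(m - A) / s3 = 1 / s3\<^sup>2 * (s3 * (m - A))" using s3 by (simp add: field_simps power2_eq_square)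
      thus ?thesis using True ph_diag_site2[OF L] P3 by (simp add: s3_def)
    next
      case False thus ?thesis using ph_diag_site2[OF L] P1 by auto
    qed
    finally show ?thesis .
  qed
  moreover have "B > 0" unfolding B_def image_kernel_def using refl_pow_pos[OF r(1)] by (simp add: add_pos_pos)
  ultimately have "real_eigvec L (ham L lam 2) (level lam r) \<Phi>"
    unfolding real_eigvec_def using ham_eigvec_iff P1 L by (auto intro!: bexI[of _ 1])
  thus ?thesis by blast
qed

section \<open>Real symmetric matrices\<close>

definition real_mat :: "nat \<Rightarrow> (nat \<Rightarrow> nat \<Rightarrow> real) \<Rightarrow> complex mat" where
  "real_mat L h = mat L L (\<lambda>(i, j). complex_of_real (h (i + 1) (j + 1)))"

lemma real_mat_carrier: "real_mat L h \<in> carrier_mat L L"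
  unfolding real_mat_def by simp

lemma real_mat_mult_vec:
  assumes v: "v \<in> carrier_vec L" and i: "i < L"
  shows "(real_mat L h *\<^sub>v v) $ i = (\<Sum>j<L. complex_of_real (h (i + 1) (j + 1)) * v $ j)"
proof -
  have "(real_mat L h *\<^sub>v v) $ i = (\<Sum>j\<in>{0..<L}. row (real_mat L h) i $ j * v $ j)"
    using i v by (simp add: real_mat_def scalar_prod_def)
  also have "\<dots> = (\<Sum>j<L. complex_of_real (h (i + 1) (j + 1)) * v $ j)"
    by (rule sum.cong) (use i in \<open>auto simp: real_mat_def row_def\<close>)
  finally show ?thesis .
qed

lemma nonzero_vec_obtain:
  assumes "v \<in> carrier_vec L" "v \<noteq> 0\<^sub>v L"
  obtains j where "j < L" "v $ j \<noteq> 0"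
  using assms by (metis carrier_vecD eq_vecI index_zero_vec(1,2))

lemma real_eigvec_of_complex:
  assumes E: "\<And>i. i < L \<Longrightarrow> (\<Sum>j<L. h (i + 1) (j + 1) * f j) = x * f i" and nz: "j0 < L" "f j0 \<noteq> 0"
  shows "real_eigvec L h x (\<lambda>s. f (s - 1))"
proof -
  have "(\<Sum>j\<in>{1..L}. h i j * f (j - 1)) = x * f (i - 1)" if i: "i \<in> {1..L}" for i
  proof -
    obtain i' where i': "i = Suc i'" "i' < L" using i by (cases i) auto
    have "(\<Sum>j\<in>{1..L}. h i j * f (j - 1)) = (\<Sum>j<L. h i (Suc j) * f j)"
      using sum.atLeast1_atMost_eq[of "\<lambda>j. h i j * f (j - 1)" L] by simp
    thus ?thesis using E[OF i'(2)] i' by simp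
  qed
  moreover have "Suc j0 \<in> {1..L}" using nz by simp
  ultimately show ?thesis unfolding real_eigvec_def using nz by (intro conjI bexI[of _ "Suc j0"]) auto
qed

lemma real_eigvec_of_eigenvalue:
  assumes "eigenvalue (real_mat L h) (complex_of_real x)"
  shows "\<exists>w. real_eigvec L h x w"
proof -
  obtain v where v: "v \<in> carrier_vec L" "v \<noteq> 0\<^sub>v L" "real_mat L h *\<^sub>v v = complex_of_real x \<cdot>\<^sub>v v"
    using assms unfolding eigenvalue_def eigenvector_def by (auto simp: real_mat_def)
  obtain j0 where j0: "j0 < L" "v $ j0 \<noteq> 0" using nonzero_vec_obtain[OF v(1,2)] .
  have E: "(\<Sum>j<L. complex_of_real (h (i + 1) (j + 1)) * v $ j) = complex_of_real x * v $ i" if "i < L" for i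
    using arg_cong[OF v(3), of "\<lambda>u. u $ i"] real_mat_mult_vec[OF v(1) that] v(1) that by simp
  show ?thesis
  proof (cases "Re (v $ j0) = 0")
    case False
    have "(\<Sum>j<L. h (i + 1) (j + 1) * Re (v $ j)) = x * Re (v $ i)" if "i < L" for i
      using arg_cong[OF E[OF that], of Re] by simp
    from real_eigvec_of_complex[OF this j0(1)] False show ?thesis by blast
  next
    case True
    hence Im0: "Im (v $ j0) \<noteq> 0" using j0(2) complex_eq_iff[of "v $ j0" 0] by auto
    have "(\<Sum>j<L. h (i + 1) (j + 1) * Im (v $ j)) = x * Im (v $ i)" if "i < L" for i
      using arg_cong[OF E[OF that], of Im] by simp
    from real_eigvec_of_complex[OF this j0(1)] Im0 show ?thesis by blast
  qed
qed

lemma eigenvalue_of_real_eigvec: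
  assumes "real_eigvec L h x w"
  shows "eigenvalue (real_mat L h) (complex_of_real x)"
proof -
  obtain nz: "\<exists>i\<in>{1..L}. w i \<noteq> 0" and E: "\<forall>i\<in>{1..L}. (\<Sum>j\<in>{1..L}. h i j * w j) = x * w i"
    using assms unfolding real_eigvec_def by blast
  define v where "v = vec L (\<lambda>j. complex_of_real (w (j + 1)))"
  have vc: "v \<in> carrier_vec L" unfolding v_def by simp
  obtain i0 where i0: "i0 \<in> {1..L}" "w i0 \<noteq> 0" using nz by blast
  have "v $ (i0 - 1) \<noteq> 0" using i0 unfolding v_def by auto
  hence vnz: "v \<noteq> 0\<^sub>v L" using i0 by auto
  have "real_mat L h *\<^sub>v v = complex_of_real x \<cdot>\<^sub>v v"
  proof (rule eq_vecI)
    fix i assume "i < dim_vec (complex_of_real x \<cdot>\<^sub>v v)"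
    hence i: "i < L" using vc by simp
    have "(real_mat L h *\<^sub>v v) $ i = (\<Sum>j<L. complex_of_real (h (i + 1) (j + 1)) * v $ j)"
      by (rule real_mat_mult_vec[OF vc i])
    also have "\<dots> = complex_of_real (\<Sum>j<L. h (i + 1) (Suc j) * w (Suc j))"
      unfolding v_def by (simp add: of_real_sum)
    also have "(\<Sum>j<L. h (i + 1) (Suc j) * w (Suc j)) = (\<Sum>j\<in>{1..L}. h (i + 1) j * w j)"
      using sum.atLeast1_atMost_eq[of "\<lambda>j. h (i + 1) j * w j" L] by simp
    also have "\<dots> = x * w (i + 1)" using E i by auto
    finally show "(real_mat L h *\<^sub>v v) $ i = (complex_of_real x \<cdot>\<^sub>v v) $ i" using i unfolding v_def by simp
  qed (simp add: real_mat_def v_def)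
  thus ?thesis
    unfolding eigenvalue_def eigenvector_def using vc vnz by (auto simp: real_mat_def)
qed

lemma eigenvalue_real_mat_iff:
  "eigenvalue (real_mat L h) (complex_of_real x) \<longleftrightarrow> (\<exists>w. real_eigvec L h x w)"
  using real_eigvec_of_eigenvalue eigenvalue_of_real_eigvec by blast

lemma finite_real_eigenvalues: "finite {x :: real. eigenvalue (real_mat L h) (complex_of_real x)}"
proof -
  define p where "p = char_poly (real_mat L h)"
  have "coeff p L = 1" unfolding p_def using degree_monic_char_poly[OF real_mat_carrier] by simp
  hence p0: "p \<noteq> 0" by auto
  have "{x :: real. eigenvalue (real_mat L h) (complex_of_real x)} \<subseteq> Re ` {z. poly p z = 0}"
  proof
    fix x assume "x \<in> {x :: real. eigenvalue (real_mat L h) (complex_of_real x)}"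
    hence "poly p (complex_of_real x) = 0"
      unfolding p_def using eigenvalue_root_char_poly[OF real_mat_carrier] by auto
    thus "x \<in> Re ` {z. poly p z = 0}" by (intro image_eqI[of _ _ "complex_of_real x"]) auto
  qed
  moreover have "finite (Re ` {z. poly p z = 0})" using poly_roots_finite[OF p0] by simp
  ultimately show ?thesis by (rule finite_subset)
qed

lemma real_mat_symmetric_eigenvalue_real:
  assumes sym: "\<And>i j. h i j = h j i" and ev: "eigenvalue (real_mat L h) a"
  shows "Im a = 0"
proof -
  obtain v where v: "v \<in> carrier_vec L" "v \<noteq> 0\<^sub>v L" "real_mat L h *\<^sub>v v = a \<cdot>\<^sub>v v"
    using ev unfolding eigenvalue_def eigenvector_def by (auto simp: real_mat_def)
  define H where "H i j = complex_of_real (h (i + 1) (j + 1))" for i j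
  have E: "(\<Sum>j<L. H i j * v $ j) = a * v $ i" if "i < L" for i
    using arg_cong[OF v(3), of "\<lambda>u. u $ i"] real_mat_mult_vec[OF v(1) that] v(1) that
    unfolding H_def by simp
  define Q where "Q = (\<Sum>i<L. cnj (v $ i) * (\<Sum>j<L. H i j * v $ j))"
  define n where "n = (\<Sum>i<L. (norm (v $ i))\<^sup>2)"
  have "Q = (\<Sum>i<L. a * complex_of_real ((norm (v $ i))\<^sup>2))"
    unfolding Q_def
  proof (rule sum.cong)
    fix i assume "i \<in> {..<L}"
    hence "cnj (v $ i) * (\<Sum>j<L. H i j * v $ j) = a * (v $ i * cnj (v $ i))" using E by (simp add: mult_ac)
    thus "cnj (v $ i) * (\<Sum>j<L. H i j * v $ j) = a * complex_of_real ((norm (v $ i))\<^sup>2)"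
      by (simp only: complex_norm_square[symmetric])
  qed simp
  hence Qa: "Q = a * complex_of_real n" unfolding n_def by (simp add: sum_distrib_left)
  have "cnj Q = (\<Sum>i<L. \<Sum>j<L. v $ i * H i j * cnj (v $ j))"
    unfolding Q_def H_def by (simp add: sum_distrib_left mult_ac)
  also have "\<dots> = (\<Sum>j<L. \<Sum>i<L. v $ i * H i j * cnj (v $ j))" by (rule sum.swap)
  also have "\<dots> = Q" unfolding Q_def H_def by (simp add: sum_distrib_left sym mult_ac)
  finally have "Im Q = 0" using complex_eq_iff[of "cnj Q" Q] by simp
  moreover have "n > 0"
  proof -
    obtain j0 where "j0 < L" "v $ j0 \<noteq> 0" using nonzero_vec_obtain[OF v(1,2)] .
    hence "0 < (norm (v $ j0))\<^sup>2" "(norm (v $ j0))\<^sup>2 \<le> n"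
      unfolding n_def by (auto intro!: member_le_sum)
    thus ?thesis by linarith
  qed
  ultimately show ?thesis unfolding Qa by simp
qed

lemma real_mat_symmetric_has_real_eigenvalue:
  assumes L: "L > 0" and sym: "\<And>i j. h i j = h j i"
  shows "\<exists>x. eigenvalue (real_mat L h) (complex_of_real x)"
proof -
  obtain as where as: "char_poly (real_mat L h) = (\<Prod>a\<leftarrow>as. [:- a, 1:])" "length as = L"
    using char_poly_factorized[OF real_mat_carrier] by blast
  then obtain a as' where "as = a # as'" using L by (cases as) auto
  hence "poly (char_poly (real_mat L h)) a = 0" unfolding as(1) by (simp add: poly_prod_list)
  hence ev: "eigenvalue (real_mat L h) a" using eigenvalue_root_char_poly[OF real_mat_carrier] by auto
  have "complex_of_real (Re a) = a"
    using real_mat_symmetric_eigenvalue_real[OF sym ev] by (simp add: complex_eq_iff)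
  thus ?thesis using ev by metis
qed

section \<open>Comparison of the largest eigenvalues\<close>

lemma site2_eigenvalue_ge_level:
  assumes L: "3 \<le> L" and lam: "lam > 0" and r: "0 < r" "r < 1" and F: "1 \<le> reduced_top L lam r"
  shows "\<exists>x w. real_eigvec L (ham L lam 2) x w \<and> level lam r \<le> x"
proof -
  obtain r' where r': "0 < r'" "r' \<le> r" "reduced_top L lam r' = 1"
    using reduced_top_eq_one_below[OF L lam r F] by blast
  obtain w where "real_eigvec L (ham L lam 2) (level lam r') w"
    using site2_eigvec[OF L lam _ _ r'(3)] r' r by auto
  moreover have "level lam r \<le> level lam r'" by (rule level_antimono) (use r' r lam in auto)
  ultimately show ?thesis by blast
qed

lemma one_le_reduced_top_of_eigvec:
  assumes L: "3 \<le> L" and lam: "lam > 0" and r: "0 < r" "r < 1"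
    and k: "k \<in> {1..L}" "k \<noteq> 2" and w: "real_eigvec L (ham L lam k) (level lam r) w"
  shows "1 \<le> reduced_top L lam r"
proof -
  have "(\<Sum>j\<in>{1..L}. shifted_Pi L lam (level lam r) i j * w j) = ph_diag L k i * w i"
    if "i \<in> {1..L}" for i
    using w ham_eigvec_iff[OF that] that unfolding real_eigvec_def by blast
  from two_green_norm_le_top_eig2[OF L lam r k this] w
  show ?thesis unfolding one_le_reduced_top_iff[OF L lam r] real_eigvec_def by blast
qed

lemma site2_eigenvalue_ge:
  assumes L: "3 \<le> L" and lam: "lam > 0" and k: "k \<in> {1..L}"
    and w: "real_eigvec L (ham L lam k) y w"
  shows "\<exists>x w'. real_eigvec L (ham L lam 2) x w' \<and> y \<le> x"
proof (cases "k = 2 \<or> y \<le> 0")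
  case True
  obtain r where r: "0 < r" "r < 1" "1 \<le> reduced_top L lam r"
    using exists_one_le_reduced_top[OF L lam] by blast
  show ?thesis
    using True w site2_eigenvalue_ge_level[OF L lam r] level_pos[OF lam r(1,2)] by force
next
  case False
  then obtain r where r: "0 < r" "r < 1" "level lam r = y" using level_surj[OF lam] by force
  have "1 \<le> reduced_top L lam r"
    by (rule one_le_reduced_top_of_eigvec[OF L lam r(1,2) k]) (use False w r(3) in auto)
  thus ?thesis using site2_eigenvalue_ge_level[OF L lam r(1,2)] r(3) by blast
qed

lemma largest_eigenvalue_ham_le_site2:
  assumes L: "3 \<le> L" and lam: "lam > 0" and k: "k \<in> {1..L}"
  shows "largest_eigenvalue (real_mat L (ham L lam k)) \<le> largest_eigenvalue (real_mat L (ham L lam 2))"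
proof -
  define S where "S k' = {x :: real. eigenvalue (real_mat L (ham L lam k')) (complex_of_real x)}" for k'
  have fin: "finite (S k')" for k' unfolding S_def by (rule finite_real_eigenvalues)
  have "S k \<noteq> {}"
    using real_mat_symmetric_has_real_eigenvalue[of L "ham L lam k"] L ham_commute unfolding S_def by auto
  hence "Max (S k) \<in> S k" using fin by (rule Max_in[rotated])
  then obtain x where "x \<in> S 2" "Max (S k) \<le> x"
    using site2_eigenvalue_ge[OF L lam k] unfolding S_def eigenvalue_real_mat_iff by blast
  hence "Max (S k) \<le> Max (S 2)" using fin by (meson Max_ge order_trans)
  thus ?thesis unfolding largest_eigenvalue_def S_def .
qed

lemma Piph_diag_single:
  assumes L: "3 \<le> L" and k: "k \<in> {1..L}" and a: "\<forall>i\<in>{1..L}. a i = (if i = k then 1 else 0)"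
    and t: "t \<in> {1..L}"
  shows "Piph_diag L a t = ph_diag L k t"
proof -
  consider "t = 1" | "t = L" | "2 \<le> t" "t \<le> L - 1" using t by force
  thus ?thesis
  proof cases
    case 1
    have "a 2 = (if 2 = k then 1 else 0)" using a L by auto
    thus ?thesis unfolding Piph_diag_def ph_diag_def ph_support_def delta_def site_scale_def 1
      using k by auto
  next
    case 2
    have "a (L - 1) = (if L - 1 = k then 1 else 0)" using a L by auto
    moreover have "t \<noteq> 1" using 2 L by simp
    ultimately show ?thesis unfolding Piph_diag_def ph_diag_def ph_support_def delta_def site_scale_def
      using 2 L k by auto
  next
    case 3
    have "t - 1 \<in> {1..L}" "t + 1 \<in> {1..L}" using 3 by auto
    hence "a (t - 1) = (if t - 1 = k then 1 else 0)" "a (t + 1) = (if t + 1 = k then 1 else 0)"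
      using a by blast+
    moreover have "t \<noteq> 1" "t \<noteq> L" using 3 L by auto
    ultimately show ?thesis unfolding Piph_diag_def ph_diag_def ph_support_def delta_def site_scale_def
      using 3 k by auto
  qed
qed

lemma Piph_mat_minus_Pi_mat:
  assumes L: "3 \<le> L" and k: "k \<in> {1..L}" and a: "\<forall>i\<in>{1..L}. a i = (if i = k then 1 else 0)"
  shows "Piph_mat L a - complex_of_real lam \<cdot>\<^sub>m Pi_mat L = real_mat L (ham L lam k)"
proof (rule eq_matI)
  fix i j assume "i < dim_row (real_mat L (ham L lam k))" "j < dim_col (real_mat L (ham L lam k))"
  hence ij: "i < L" "j < L" unfolding real_mat_def by auto
  have "Piph_diag L a (i + 1) = ph_diag L k (i + 1)" by (rule Piph_diag_single[OF L k a]) (use ij in auto)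
  thus "(Piph_mat L a - complex_of_real lam \<cdot>\<^sub>m Pi_mat L) $$ (i, j) = real_mat L (ham L lam k) $$ (i, j)"
    using ij unfolding Piph_mat_def Pi_mat_def real_mat_def ham_def by auto
qed (auto simp: Piph_mat_def Pi_mat_def real_mat_def)

lemma bitstring_wt_one_obtain:
  assumes "is_bitstring L a" "wt L a = 1"
  obtains k where "k \<in> {1..L}" "\<forall>i\<in>{1..L}. a i = (if i = k then 1 else 0)"
proof -
  obtain k where kk: "{i \<in> {1..L}. a i = 1} = {k}"
    using assms(2) unfolding wt_def by (rule card_1_singletonE)
  have "a i = (if i = k then 1 else 0)" if "i \<in> {1..L}" for i
    using assms(1) kk that unfolding is_bitstring_def by (auto simp: set_eq_iff)
  thus ?thesis using that kk by blast
qed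

theorem theorem3:
  fixes L :: nat and lam :: real
  assumes "L \<ge> 3" and "lam > 0"
  shows "\<forall>a. is_bitstring L a \<and> wt L a = 1 \<longrightarrow>
     largest_eigenvalue (Piph_mat L a - complex_of_real lam \<cdot>\<^sub>m Pi_mat L)
       \<le> largest_eigenvalue (Piph_mat L (\<lambda>i. if i = 2 then 1 else 0) - complex_of_real lam \<cdot>\<^sub>m Pi_mat L)"
proof (intro allI impI)
  fix a assume "is_bitstring L a \<and> wt L a = 1"
  then obtain k where k: "k \<in> {1..L}" "\<forall>i\<in>{1..L}. a i = (if i = k then 1 else 0)"
    using bitstring_wt_one_obtain by blast
  have "(2::nat) \<in> {1..L}" using assms by simp
  from Piph_mat_minus_Pi_mat[OF assms(1) this, of "\<lambda>i. if i = 2 then 1 else 0"]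
    Piph_mat_minus_Pi_mat[OF assms(1) k]
  show "largest_eigenvalue (Piph_mat L a - complex_of_real lam \<cdot>\<^sub>m Pi_mat L)
       \<le> largest_eigenvalue (Piph_mat L (\<lambda>i. if i = 2 then 1 else 0) - complex_of_real lam \<cdot>\<^sub>m Pi_mat L)"
    using largest_eigenvalue_ham_le_site2[OF assms k(1)] by simp
qed

end
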